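(* Let $$y=\frac{9s(2s^3-3s+4)}{4(s+1)(s-1)^2(2s^2+6s+1)},\qquad t=\frac{27s^2}{4(s^2-1)^3}.$$ Then $y(t)$ is a solution of $\mathrm{P}_{\mathrm{VI}}$ with parameters $(\theta_1,\theta_2,\theta_3,\theta_4)=(1/2,1/2,1/4,2/3)$.
   Context: $\mathrm{P}_{\mathrm{VI}}$ is the equation $$\frac{d^2y}{dt^2}=\frac12\Big(\frac1y+\frac1{y-1}+\frac1{y-t}\Big)\Big(\frac{dy}{dt}\Big)^2-\Big(\frac1t+\frac1{t-1}+\frac1{y-t}\Big)\frac{dy}{dt}+\frac{y(y-1)(y-t)}{t^2(t-1)^2}\Big(\alpha+\beta\frac{t}{y^2}+\gamma\frac{t-1}{(y-1)^2}+\delta\frac{t(t-1)}{(y-t)^2}\Big),$$ with $\alpha=(\theta_4-1)^2/2$, $\beta=-\theta_1^2/2$, $\gamma=\theta_3^2/2$, $\delta=(1-\theta_2^2)/2$. When $y,t$ are given as rational functions of a parameter on a curve, derivatives with respect to $t$ are computed via the chain rule. *)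

theory Defs
  imports "HOL-Analysis.Analysis"
begin

definition PVI_residual ::
  "complex \<Rightarrow> complex \<Rightarrow> complex \<Rightarrow> complex \<Rightarrow> complex \<Rightarrow> complex \<Rightarrow> complex \<Rightarrow> complex \<Rightarrow> complex" where
  "PVI_residual th1 th2 th3 th4 t y y1 y2 =
     (let \<alpha> = (th4 - 1)^2 / 2; \<beta> = - (th1^2) / 2; \<gamma> = th3^2 / 2; \<delta> = (1 - th2^2) / 2 in
      y2 - ( (1/2) * (1/y + 1/(y - 1) + 1/(y - t)) * y1^2
             - (1/t + 1/(t - 1) + 1/(y - t)) * y1
             + y * (y - 1) * (y - t) / (t^2 * (t - 1)^2)
               * (\<alpha> + \<beta> * t / y^2 + \<gamma> * (t - 1) / (y - 1)^2 + \<delta> * t * (t - 1) / (y - t)^2)))"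

definition PVI_sol_y :: "complex \<Rightarrow> complex" where
  "PVI_sol_y s = 9 * s * (2 * s^3 - 3 * s + 4) / (4 * (s + 1) * (s - 1)^2 * (2 * s^2 + 6 * s + 1))"

definition PVI_sol_t :: "complex \<Rightarrow> complex" where
  "PVI_sol_t s = 27 * s^2 / (4 * (s^2 - 1)^3)"

end

theory Submission
  imports Defs
begin

(* Along the curve, y and t are rational functions of s, so by the chain rule
   y' = (dy/ds) / (dt/ds) and y'' = (dy'/ds) / (dt/ds) are rational functions of s as well,
   obtained in closed form from the quotient rule. The differences y - 1, y - t and t - 1
   factor over the same few polynomials in s as y and t themselves. In terms of these factors
   every coefficient of P_VI collapses to a single fraction, and after bringing the three terms
   of the right-hand side to the common denominator the equation reduces to one polynomial
   identity in s. *)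

definition PVI_sol_dy_ds :: "complex \<Rightarrow> complex" where
  "PVI_sol_dy_ds u = - 9 * (4 - 2 * u + 3 * u^2 + 67 * u^3 + 28 * u^4 + 4 * u^6 + 4 * u^7)
     / (4 * (u + 1)^2 * (u - 1)^3 * (2 * u^2 + 6 * u + 1)^2)"

definition PVI_sol_dt_ds :: "complex \<Rightarrow> complex" where
  "PVI_sol_dt_ds u = - 27 * u * (2 * u^2 + 1) / (2 * (u + 1)^4 * (u - 1)^4)"

definition PVI_sol_dy_dt :: "complex \<Rightarrow> complex" where
  "PVI_sol_dy_dt u = (u + 1)^2 * (u - 1)
     * (4 - 2 * u + 3 * u^2 + 67 * u^3 + 28 * u^4 + 4 * u^6 + 4 * u^7)
     / (6 * u * (2 * u^2 + 1) * (2 * u^2 + 6 * u + 1)^2)"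

definition PVI_sol_d2y_dt2 :: "complex \<Rightarrow> complex" where
  "PVI_sol_d2y_dt2 u = (u + 1)^5 * (u - 1)^4
     * (- 4 - 68 * u - 23 * u^2 - 87 * u^3 + 185 * u^4 - u^5 - 2530 * u^6 - 1612 * u^7
        - 724 * u^8 - 336 * u^9 - 104 * u^10 - 224 * u^11 - 256 * u^12 - 48 * u^13)
     / (81 * u^3 * (2 * u^2 + 1)^3 * (2 * u^2 + 6 * u + 1)^3)"

lemma DERIV_divideI:
  fixes f g :: "'a::real_normed_field \<Rightarrow> 'a"
  assumes "(f has_field_derivative f') (at x)" "(g has_field_derivative g') (at x)"
    and "g x \<noteq> 0" "h \<noteq> 0" "(f' * g x - f x * g') * h = k * (g x * g x)"
  shows "((\<lambda>x. f x / g x) has_field_derivative k / h) (at x)"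
proof -
  have "k / h = (f' * g x - f x * g') / (g x * g x)"
    using assms(3-5) by (simp add: frac_eq_eq)
  then show ?thesis
    using DERIV_divide [OF assms(1-3)] by simp
qed

lemma PVI_sol_y_has_field_derivative:
  assumes "u + 1 \<noteq> 0" "u - 1 \<noteq> 0" "2 * u^2 + 6 * u + 1 \<noteq> 0"
  shows "(PVI_sol_y has_field_derivative PVI_sol_dy_ds u) (at u)"
  unfolding PVI_sol_y_def [abs_def] PVI_sol_dy_ds_def
proof (rule DERIV_divideI)
  show "((\<lambda>u. 9 * u * (2 * u^3 - 3 * u + 4)) has_field_derivative 72 * u^3 - 54 * u + 36) (at u)"
    by (auto intro!: derivative_eq_intros; algebra)
  show "((\<lambda>u. 4 * (u + 1) * (u - 1)^2 * (2 * u^2 + 6 * u + 1)) has_field_derivative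
      20 - 40 * u - 84 * u^2 + 64 * u^3 + 40 * u^4) (at u)"
    by (auto intro!: derivative_eq_intros; algebra)
  show "4 * (u + 1) * (u - 1)^2 * (2 * u^2 + 6 * u + 1) \<noteq> 0"
    using assms by (metis mult_eq_0_iff power_eq_0_iff zero_neq_numeral)
  show "4 * (u + 1)^2 * (u - 1)^3 * (2 * u^2 + 6 * u + 1)^2 \<noteq> 0"
    using assms by (metis mult_eq_0_iff power_eq_0_iff zero_neq_numeral)
qed algebra

lemma PVI_sol_t_has_field_derivative:
  assumes "u + 1 \<noteq> 0" "u - 1 \<noteq> 0"
  shows "(PVI_sol_t has_field_derivative PVI_sol_dt_ds u) (at u)"
  unfolding PVI_sol_t_def [abs_def] PVI_sol_dt_ds_def
proof (rule DERIV_divideI)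
  show "((\<lambda>u. 27 * u^2) has_field_derivative 54 * u) (at u)"
    by (auto intro!: derivative_eq_intros)
  show "((\<lambda>u. 4 * (u^2 - 1)^3) has_field_derivative 24 * u * (u^2 - 1)^2) (at u)"
    by (auto intro!: derivative_eq_intros; algebra)
  have "u^2 - 1 = (u + 1) * (u - 1)"
    by algebra
  then show "4 * (u^2 - 1)^3 \<noteq> 0"
    using assms by simp
  show "2 * (u + 1)^4 * (u - 1)^4 \<noteq> 0"
    using assms by simp
qed algebra

lemma PVI_sol_dy_ds_div_dt_ds:
  assumes "u \<noteq> 0" "u + 1 \<noteq> 0" "u - 1 \<noteq> 0" "2 * u^2 + 6 * u + 1 \<noteq> 0" "2 * u^2 + 1 \<noteq> 0"
  shows "PVI_sol_dy_ds u / PVI_sol_dt_ds u = PVI_sol_dy_dt u"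
proof -
  have "PVI_sol_dy_ds u / PVI_sol_dt_ds u
    = (- 9 * (4 - 2 * u + 3 * u^2 + 67 * u^3 + 28 * u^4 + 4 * u^6 + 4 * u^7)
        * (2 * (u + 1)^4 * (u - 1)^4))
      / (4 * (u + 1)^2 * (u - 1)^3 * (2 * u^2 + 6 * u + 1)^2 * (- 27 * u * (2 * u^2 + 1)))"
    unfolding PVI_sol_dy_ds_def PVI_sol_dt_ds_def by (rule divide_divide_times_eq)
  also have "\<dots> = PVI_sol_dy_dt u"
    unfolding PVI_sol_dy_dt_def using assms by (subst frac_eq_eq) (simp_all, algebra)
  finally show ?thesis .
qed

lemma PVI_sol_dy_dt_has_field_derivative:
  assumes "u \<noteq> 0" "u + 1 \<noteq> 0" "u - 1 \<noteq> 0" "2 * u^2 + 6 * u + 1 \<noteq> 0" "2 * u^2 + 1 \<noteq> 0"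
  shows "(PVI_sol_dy_dt has_field_derivative PVI_sol_d2y_dt2 u * PVI_sol_dt_ds u) (at u)"
proof -
  have product: "PVI_sol_d2y_dt2 u * PVI_sol_dt_ds u = (u + 1)^5 * (u - 1)^4
     * (- 4 - 68 * u - 23 * u^2 - 87 * u^3 + 185 * u^4 - u^5 - 2530 * u^6 - 1612 * u^7
        - 724 * u^8 - 336 * u^9 - 104 * u^10 - 224 * u^11 - 256 * u^12 - 48 * u^13)
     * (- 27 * u * (2 * u^2 + 1))
     / (81 * u^3 * (2 * u^2 + 1)^3 * (2 * u^2 + 6 * u + 1)^3 * (2 * (u + 1)^4 * (u - 1)^4))"
    unfolding PVI_sol_d2y_dt2_def PVI_sol_dt_ds_def by simp
  show ?thesis
    unfolding PVI_sol_dy_dt_def [abs_def] product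
  proof (rule DERIV_divideI)
    show "((\<lambda>u. (u + 1)^2 * (u - 1)
          * (4 - 2 * u + 3 * u^2 + 67 * u^3 + 28 * u^4 + 4 * u^6 + 4 * u^7))
        has_field_derivative - 2 + 6 * u - 204 * u^2 - 376 * u^3 + 210 * u^4 + 546 * u^5
          + 140 * u^6 + 72 * u^8 + 40 * u^9) (at u)"
      by (auto intro!: derivative_eq_intros; algebra)
    show "((\<lambda>u. 6 * u * (2 * u^2 + 1) * (2 * u^2 + 6 * u + 1)^2) has_field_derivative
        6 + 144 * u + 756 * u^2 + 1152 * u^3 + 2520 * u^4 + 1728 * u^5 + 336 * u^6) (at u)"
      by (auto intro!: derivative_eq_intros; algebra)
    show "6 * u * (2 * u^2 + 1) * (2 * u^2 + 6 * u + 1)^2 \<noteq> 0"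
      using assms by (metis mult_eq_0_iff power_eq_0_iff zero_neq_numeral)
    show "81 * u^3 * (2 * u^2 + 1)^3 * (2 * u^2 + 6 * u + 1)^3 * (2 * (u + 1)^4 * (u - 1)^4) \<noteq> 0"
      using assms by (metis mult_eq_0_iff power_eq_0_iff zero_neq_numeral)
  qed algebra
qed

lemma deriv_PVI_sol_y_div_deriv_PVI_sol_t:
  assumes "u \<noteq> 0" "u + 1 \<noteq> 0" "u - 1 \<noteq> 0" "2 * u^2 + 6 * u + 1 \<noteq> 0" "2 * u^2 + 1 \<noteq> 0"
  shows "deriv PVI_sol_y u / deriv PVI_sol_t u = PVI_sol_dy_dt u"
  using DERIV_imp_deriv [OF PVI_sol_y_has_field_derivative]
    DERIV_imp_deriv [OF PVI_sol_t_has_field_derivative] PVI_sol_dy_ds_div_dt_ds assms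
  by simp

lemma deriv_deriv_PVI_sol_y_div_deriv_PVI_sol_t:
  assumes "s \<noteq> 0" "s + 1 \<noteq> 0" "s - 1 \<noteq> 0" "2 * s^2 + 6 * s + 1 \<noteq> 0" "2 * s^2 + 1 \<noteq> 0"
  shows "deriv (\<lambda>u. deriv PVI_sol_y u / deriv PVI_sol_t u) s
    = PVI_sol_d2y_dt2 s * PVI_sol_dt_ds s"
proof -
  let ?U = "{u::complex. u \<noteq> 0 \<and> u + 1 \<noteq> 0 \<and> u - 1 \<noteq> 0
    \<and> 2 * u^2 + 6 * u + 1 \<noteq> 0 \<and> 2 * u^2 + 1 \<noteq> 0}"
  have "open ?U"
    by (intro open_Collect_conj open_Collect_neq continuous_intros)
  moreover have "s \<in> ?U"
    using assms by simp
  ultimately have "\<forall>\<^sub>F u in nhds s. deriv PVI_sol_y u / deriv PVI_sol_t u = PVI_sol_dy_dt u"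
    unfolding eventually_nhds using deriv_PVI_sol_y_div_deriv_PVI_sol_t by blast
  then have "deriv (\<lambda>u. deriv PVI_sol_y u / deriv PVI_sol_t u) s = deriv PVI_sol_dy_dt s"
    by (rule deriv_cong_ev [OF _ refl])
  also have "\<dots> = PVI_sol_d2y_dt2 s * PVI_sol_dt_ds s"
    by (rule DERIV_imp_deriv [OF PVI_sol_dy_dt_has_field_derivative [OF assms]])
  finally show ?thesis .
qed

lemma PVI_sol_y_eq:
  "PVI_sol_y s = s * (18 * s^3 - 27 * s + 36) / (4 * (s + 1) * (s - 1)^2 * (2 * s^2 + 6 * s + 1))"
proof -
  have "9 * s * (2 * s^3 - 3 * s + 4) = s * (18 * s^3 - 27 * s + 36)"
    by algebra
  then show ?thesis
    unfolding PVI_sol_y_def by simp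
qed

lemma PVI_sol_t_eq: "PVI_sol_t s = 27 * s^2 / (4 * (s + 1)^3 * (s - 1)^3)"
proof -
  have "(s^2 - 1)^3 = (s + 1)^3 * (s - 1)^3"
    by algebra
  then show ?thesis
    unfolding PVI_sol_t_def by (simp add: mult.assoc)
qed

lemma PVI_sol_y_minus_1:
  assumes "s + 1 \<noteq> 0" "s - 1 \<noteq> 0" "2 * s^2 + 6 * s + 1 \<noteq> 0"
  shows "PVI_sol_y s - 1 = - ((2 * s^2 + 1) * (1 - 4 * s) * (4 - s^2))
    / (4 * (s + 1) * (s - 1)^2 * (2 * s^2 + 6 * s + 1))"
proof -
  have D: "4 * (s + 1) * (s - 1)^2 * (2 * s^2 + 6 * s + 1) \<noteq> 0"
    using assms by (metis mult_eq_0_iff power_eq_0_iff zero_neq_numeral)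
  show ?thesis
    unfolding PVI_sol_y_def divide_diff_eq_iff [OF D] frac_eq_eq [OF D D] by algebra
qed

lemma PVI_sol_y_minus_t:
  assumes "s + 1 \<noteq> 0" "s - 1 \<noteq> 0" "2 * s^2 + 6 * s + 1 \<noteq> 0"
  shows "PVI_sol_y s - PVI_sol_t s = - (9 * s * (2 * s^2 + 1) * (s^2 + s + 1) * (4 - s^2))
    / (4 * (s + 1)^3 * (s - 1)^3 * (2 * s^2 + 6 * s + 1))"
proof -
  have Dy: "4 * (s + 1) * (s - 1)^2 * (2 * s^2 + 6 * s + 1) \<noteq> 0"
    and Dt: "4 * (s + 1)^3 * (s - 1)^3 \<noteq> 0"
    and D: "4 * (s + 1)^3 * (s - 1)^3 * (2 * s^2 + 6 * s + 1) \<noteq> 0"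
    using assms by (metis mult_eq_0_iff power_eq_0_iff zero_neq_numeral)+
  show ?thesis
    unfolding PVI_sol_y_def PVI_sol_t_eq diff_frac_eq [OF Dy Dt]
      frac_eq_eq [OF no_zero_divisors [OF Dy Dt] D]
    by algebra
qed

lemma PVI_sol_t_minus_1:
  assumes "s + 1 \<noteq> 0" "s - 1 \<noteq> 0"
  shows "PVI_sol_t s - 1 = (2 * s^2 + 1)^2 * (4 - s^2) / (4 * (s + 1)^3 * (s - 1)^3)"
proof -
  have D: "4 * (s + 1)^3 * (s - 1)^3 \<noteq> 0"
    using assms by (metis mult_eq_0_iff power_eq_0_iff zero_neq_numeral)
  show ?thesis
    unfolding PVI_sol_t_eq divide_diff_eq_iff [OF D] frac_eq_eq [OF D D] by algebra
qed

(* The polynomial factors are fixed as opaque variables so that field_simps clears the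
   denominators without multiplying them out; they are expanded in s only for the ring
   identities that remain afterwards. *)
context
  fixes s p m q w n0 l n2 n3 :: complex
  assumes factors_nonzero:
      "s \<noteq> 0" "p \<noteq> 0" "m \<noteq> 0" "q \<noteq> 0" "w \<noteq> 0" "n0 \<noteq> 0" "l \<noteq> 0" "n2 \<noteq> 0" "n3 \<noteq> 0"
    and factors_def: "p = s + 1" "m = s - 1" "q = 2 * s^2 + 6 * s + 1" "w = 2 * s^2 + 1"
      "n0 = 18 * s^3 - 27 * s + 36" "l = 1 - 4 * s" "n2 = s^2 + s + 1" "n3 = 4 - s^2"
begin

lemma PVI_sol_factored:
  "PVI_sol_y s = s * n0 / (4 * p * m^2 * q)"
  "PVI_sol_t s = 27 * s^2 / (4 * p^3 * m^3)"
  unfolding factors_def by (simp_all only: PVI_sol_y_eq PVI_sol_t_eq)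

lemma PVI_sol_differences_factored:
  "PVI_sol_y s - 1 = - (w * l * n3) / (4 * p * m^2 * q)"
  "PVI_sol_y s - PVI_sol_t s = - (9 * s * w * n2 * n3) / (4 * p^3 * m^3 * q)"
  "PVI_sol_t s - 1 = w^2 * n3 / (4 * p^3 * m^3)"
  using factors_nonzero(2-4) unfolding factors_def
  by (simp_all add: PVI_sol_y_minus_1 PVI_sol_y_minus_t PVI_sol_t_minus_1)

lemma PVI_sol_dy_dt_factored:
  "PVI_sol_dy_dt s
    = p^2 * m * (4 - 2 * s + 3 * s^2 + 67 * s^3 + 28 * s^4 + 4 * s^6 + 4 * s^7) / (6 * s * w * q^2)"
  unfolding PVI_sol_dy_dt_def factors_def ..

lemma PVI_sol_d2y_dt2_factored:
  "PVI_sol_d2y_dt2 s = p^5 * m^4 * n0 * l * n2 * n3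
    * (- 4 - 68 * s - 23 * s^2 - 87 * s^3 + 185 * s^4 - s^5 - 2530 * s^6 - 1612 * s^7
       - 724 * s^8 - 336 * s^9 - 104 * s^10 - 224 * s^11 - 256 * s^12 - 48 * s^13) / 81
    / (s^3 * q^3 * w^3 * n0 * l * n2 * n3)"
  unfolding PVI_sol_d2y_dt2_def factors_def [symmetric]
  using factors_nonzero by (simp add: field_simps)

lemma PVI_sol_inverse_sum_y:
  "1 / PVI_sol_y s + 1 / (PVI_sol_y s - 1) + 1 / (PVI_sol_y s - PVI_sol_t s)
    = 4 * p * m^2 * q * (8 - 63 * s - 25 * s^2 - 17 * s^3 - 13 * s^4 - 62 * s^5 - 6 * s^6 + 16 * s^7)
      / (s * w * n0 * l * n2 * n3)"
  unfolding PVI_sol_differences_factored unfolding PVI_sol_factored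
  by (simp add: field_simps factors_nonzero; unfold factors_def; algebra)

lemma PVI_sol_inverse_sum_t:
  "1 / PVI_sol_t s + 1 / (PVI_sol_t s - 1) + 1 / (PVI_sol_y s - PVI_sol_t s)
    = 4 * p^3 * m^3 * (4 + s + 28 * s^2 + 30 * s^3 + 18 * s^4 + 8 * s^6 - 4 * s^7 - 4 * s^8)
      / (27 * s^2 * w^2 * n2 * n3)"
  unfolding PVI_sol_differences_factored unfolding PVI_sol_factored
  by (simp add: field_simps factors_nonzero; unfold factors_def; algebra)

lemma PVI_sol_potential_prefactor:
  "PVI_sol_y s * (PVI_sol_y s - 1) * (PVI_sol_y s - PVI_sol_t s)
      / ((PVI_sol_t s)^2 * (PVI_sol_t s - 1)^2)
    = 4 * p^7 * m^5 * n0 * l * n2 / (81 * s^2 * q^3 * w^2)"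
  unfolding PVI_sol_differences_factored unfolding PVI_sol_factored
  by (simp add: field_simps factors_nonzero; unfold factors_def; algebra)

lemma PVI_sol_potential:
  "1/18 + -1/8 * PVI_sol_t s / (PVI_sol_y s)^2 + 1/32 * (PVI_sol_t s - 1) / (PVI_sol_y s - 1)^2
      + 3/8 * PVI_sol_t s * (PVI_sol_t s - 1) / (PVI_sol_y s - PVI_sol_t s)^2
    = 9 * (304 - 2576 * s - 11548 * s^2 - 15356 * s^3 + 99887 * s^4 + 62509 * s^5 - 64751 * s^6
        + 47769 * s^7 + 63084 * s^8 - 63736 * s^9 - 36352 * s^10 + 27256 * s^11 + 22880 * s^12
        + 5968 * s^13 + 368 * s^14 - 112 * s^15)
      / (8 * p * n0^2 * l^2 * n2^2 * n3)"
  unfolding PVI_sol_differences_factored unfolding PVI_sol_factored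
  by (simp add: field_simps factors_nonzero; unfold factors_def; algebra)

lemma PVI_sol_term_y1_sq:
  "1/2 * (1 / PVI_sol_y s + 1 / (PVI_sol_y s - 1) + 1 / (PVI_sol_y s - PVI_sol_t s))
      * (PVI_sol_dy_dt s)^2
    = p^5 * m^4
    * (128 - 1136 * s + 832 * s^2 + 2556 * s^3 - 33928 * s^4 - 9835 * s^5 + 11741 * s^6
       - 280114 * s^7 - 385660 * s^8 - 223625 * s^9 - 183399 * s^10 - 415554 * s^11
       - 309910 * s^12 - 23240 * s^13 + 4840 * s^14 - 42800 * s^15 - 10640 * s^16
       + 9136 * s^17 + 1296 * s^18 - 928 * s^19 + 416 * s^20 + 256 * s^21) / 18
    / (s^3 * q^3 * w^3 * n0 * l * n2 * n3)"
  unfolding PVI_sol_inverse_sum_y PVI_sol_dy_dt_factored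
  by (simp add: field_simps factors_nonzero; unfold factors_def; algebra)

lemma PVI_sol_term_y1:
  "(1 / PVI_sol_t s + 1 / (PVI_sol_t s - 1) + 1 / (PVI_sol_y s - PVI_sol_t s)) * PVI_sol_dy_dt s
    = 2 * p^5 * m^4 * q * n0 * l
    * (16 - 4 * s + 122 * s^2 + 335 * s^3 + 275 * s^4 + 1958 * s^5 + 2896 * s^6 + 2034 * s^7
       + 636 * s^8 + 764 * s^9 + 136 * s^10 - 308 * s^11 - 80 * s^12 + 16 * s^13 - 32 * s^14
       - 16 * s^15) / 81
    / (s^3 * q^3 * w^3 * n0 * l * n2 * n3)"
  unfolding PVI_sol_inverse_sum_t PVI_sol_dy_dt_factored
  by (simp add: field_simps factors_nonzero; unfold factors_def; algebra)

lemma PVI_sol_term_potential: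
  "PVI_sol_y s * (PVI_sol_y s - 1) * (PVI_sol_y s - PVI_sol_t s)
      / ((PVI_sol_t s)^2 * (PVI_sol_t s - 1)^2)
    * (1/18 + -1/8 * PVI_sol_t s / (PVI_sol_y s)^2
       + 1/32 * (PVI_sol_t s - 1) / (PVI_sol_y s - 1)^2
       + 3/8 * PVI_sol_t s * (PVI_sol_t s - 1) / (PVI_sol_y s - PVI_sol_t s)^2)
    = s * p^6 * m^5 * w
    * (304 - 2576 * s - 11548 * s^2 - 15356 * s^3 + 99887 * s^4 + 62509 * s^5 - 64751 * s^6
       + 47769 * s^7 + 63084 * s^8 - 63736 * s^9 - 36352 * s^10 + 27256 * s^11 + 22880 * s^12
       + 5968 * s^13 + 368 * s^14 - 112 * s^15) / 18
    / (s^3 * q^3 * w^3 * n0 * l * n2 * n3)"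
  unfolding PVI_sol_potential_prefactor PVI_sol_potential
  by (simp add: field_simps factors_nonzero; unfold factors_def; algebra)

lemma PVI_sol_numerator_identity:
  "p^5 * m^4 * n0 * l * n2 * n3
    * (- 4 - 68 * s - 23 * s^2 - 87 * s^3 + 185 * s^4 - s^5 - 2530 * s^6 - 1612 * s^7
       - 724 * s^8 - 336 * s^9 - 104 * s^10 - 224 * s^11 - 256 * s^12 - 48 * s^13) / 81
   - (p^5 * m^4
    * (128 - 1136 * s + 832 * s^2 + 2556 * s^3 - 33928 * s^4 - 9835 * s^5 + 11741 * s^6
       - 280114 * s^7 - 385660 * s^8 - 223625 * s^9 - 183399 * s^10 - 415554 * s^11
       - 309910 * s^12 - 23240 * s^13 + 4840 * s^14 - 42800 * s^15 - 10640 * s^16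
       + 9136 * s^17 + 1296 * s^18 - 928 * s^19 + 416 * s^20 + 256 * s^21) / 18
   - 2 * p^5 * m^4 * q * n0 * l
    * (16 - 4 * s + 122 * s^2 + 335 * s^3 + 275 * s^4 + 1958 * s^5 + 2896 * s^6 + 2034 * s^7
       + 636 * s^8 + 764 * s^9 + 136 * s^10 - 308 * s^11 - 80 * s^12 + 16 * s^13 - 32 * s^14
       - 16 * s^15) / 81
   + s * p^6 * m^5 * w
    * (304 - 2576 * s - 11548 * s^2 - 15356 * s^3 + 99887 * s^4 + 62509 * s^5 - 64751 * s^6
       + 47769 * s^7 + 63084 * s^8 - 63736 * s^9 - 36352 * s^10 + 27256 * s^11 + 22880 * s^12
       + 5968 * s^13 + 368 * s^14 - 112 * s^15) / 18) = 0"
  unfolding factors_def by algebra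

lemma PVI_residual_PVI_sol_factored:
  "PVI_residual (1/2) (1/2) (1/4) (2/3) (PVI_sol_t s) (PVI_sol_y s)
     (PVI_sol_dy_dt s) (PVI_sol_d2y_dt2 s) = 0"
proof -
  have parameters: "(2/3 - 1)^2 / 2 = (1/18 :: complex)" "- ((1/2)^2) / 2 = (-1/8 :: complex)"
    "(1/4)^2 / 2 = (1/32 :: complex)" "(1 - (1/2)^2) / 2 = (3/8 :: complex)"
    by (simp_all add: power2_eq_square)
  show ?thesis
    unfolding PVI_residual_def Let_def parameters PVI_sol_d2y_dt2_factored
      PVI_sol_term_y1_sq PVI_sol_term_y1 PVI_sol_term_potential
    by (simp only: diff_divide_distrib [symmetric] add_divide_distrib [symmetric]
        PVI_sol_numerator_identity) simp
qed

end

theorem mainTheorem6: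
  fixes s :: complex
  assumes "s + 1 \<noteq> 0" and "s - 1 \<noteq> 0" and "2 * s^2 + 6 * s + 1 \<noteq> 0"
    and "deriv PVI_sol_t s \<noteq> 0"
    and "PVI_sol_t s \<noteq> 0" and "PVI_sol_t s \<noteq> 1"
    and "PVI_sol_y s \<noteq> 0" and "PVI_sol_y s \<noteq> 1" and "PVI_sol_y s \<noteq> PVI_sol_t s"
  shows "PVI_residual (1/2) (1/2) (1/4) (2/3) (PVI_sol_t s) (PVI_sol_y s)
           (deriv PVI_sol_y s / deriv PVI_sol_t s)
           (deriv (\<lambda>u. deriv PVI_sol_y u / deriv PVI_sol_t u) s / deriv PVI_sol_t s) = 0"
proof -
  have dt: "deriv PVI_sol_t s = PVI_sol_dt_ds s"
    using PVI_sol_t_has_field_derivative [OF assms(1,2)] by (rule DERIV_imp_deriv)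
  have regular: "s \<noteq> 0" "2 * s^2 + 1 \<noteq> 0"
    using assms(4) unfolding dt PVI_sol_dt_ds_def by auto
  have "18 * s^3 - 27 * s + 36 \<noteq> 0"
    using assms(7) unfolding PVI_sol_y_eq by auto
  moreover have "1 - 4 * s \<noteq> 0" "4 - s^2 \<noteq> 0"
    using assms(8) PVI_sol_y_minus_1 [OF assms(1-3)] by auto
  moreover have "s^2 + s + 1 \<noteq> 0"
    using assms(9) PVI_sol_y_minus_t [OF assms(1-3)] by auto
  ultimately have "PVI_residual (1/2) (1/2) (1/4) (2/3) (PVI_sol_t s) (PVI_sol_y s)
      (PVI_sol_dy_dt s) (PVI_sol_d2y_dt2 s) = 0"
    using PVI_residual_PVI_sol_factored [OF regular(1) assms(1-3) regular(2)] by blast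
  moreover have "deriv PVI_sol_y s / deriv PVI_sol_t s = PVI_sol_dy_dt s"
    using deriv_PVI_sol_y_div_deriv_PVI_sol_t regular assms(1-3) by blast
  moreover have "deriv (\<lambda>u. deriv PVI_sol_y u / deriv PVI_sol_t u) s / deriv PVI_sol_t s
      = PVI_sol_d2y_dt2 s"
    using deriv_deriv_PVI_sol_y_div_deriv_PVI_sol_t [OF regular(1) assms(1-3) regular(2)] dt assms(4)
    by simp
  ultimately show ?thesis
    by simp
qed

end
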